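(* Let $a$ be a real symmetric $n\times n$ matrix with $a\in\Gamma_k^+$, let $s>0$ and $X\in\mathbb R^n$, and set $E=s\,a-X\otimes X$. If $\sigma_k(E)>0$, then $E\in\Gamma_k^+$. More precisely, setting $f_i=s^{1-i}\sigma_i(E)=s\,\sigma_i(a)-\langle T_{i-1}(a),X\otimes X\rangle$, one has for all $2\le i\le k$ $$\sigma_{i-1}(E)\ \ge\ f_i\,\sigma_i(a)^{-1}\sigma_{i-1}(a)\,s^{i-2}.$$ (In the application, $a=A_u$, $s=u_{tt}$, $X=\nabla u_t$, $E=E_u=u_{tt}A_u-\nabla u_t\otimes\nabla u_t$.)
   Context: $\sigma_j$ is the $j$-th elementary symmetric function of the eigenvalues, $\Gamma_k^+=\{S:\sigma_j(S)>0,\ 1\le j\le k\}$, $T_j(S)=\sum_{i=0}^{j}(-1)^i\sigma_{j-i}(S)S^i$ is the Newton transformation, and $\langle S_1,S_2\rangle=\mathrm{tr}(S_1S_2)$. *)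

theory Defs
  imports "Jordan_Normal_Form.Char_Poly"
begin

text \<open>Elementary symmetric functions of the eigenvalues of an n x n matrix S,
  read off from the characteristic polynomial
  det(t I - S) = prod_i (t - lambda_i) = sum_j (-1)^j sigma_j(lambda) t^(n-j).\<close>
definition sigma :: "nat \<Rightarrow> real mat \<Rightarrow> real" where
  "sigma j S = (if j \<le> dim_row S then (-1) ^ j * coeff (char_poly S) (dim_row S - j) else 0)"

definition Gamma_plus :: "nat \<Rightarrow> nat \<Rightarrow> real mat set" where
  "Gamma_plus n k = {S \<in> carrier_mat n n. \<forall>j. 1 \<le> j \<and> j \<le> k \<longrightarrow> sigma j S > 0}"

definition symmetric_mat :: "nat \<Rightarrow> real mat \<Rightarrow> bool" where
  "symmetric_mat n S \<longleftrightarrow> S \<in> carrier_mat n n \<and> transpose_mat S = S"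

definition newton_T :: "nat \<Rightarrow> real mat \<Rightarrow> real mat" where
  "newton_T j S = foldr (\<lambda>i M. (((-1) ^ i * sigma (j - i) S) \<cdot>\<^sub>m (S ^\<^sub>m i)) + M)
      [0..<Suc j] (0\<^sub>m (dim_row S) (dim_row S))"

definition mat_trace :: "real mat \<Rightarrow> real" where
  "mat_trace S = (\<Sum>i<dim_row S. S $$ (i, i))"

definition mat_inner :: "real mat \<Rightarrow> real mat \<Rightarrow> real" where
  "mat_inner S1 S2 = mat_trace (S1 * S2)"

definition outer :: "real vec \<Rightarrow> real mat" where
  "outer X = mat (dim_vec X) (dim_vec X) (\<lambda>(i, j). X $ i * X $ j)"

end

(*
  Diagonalise a = U diag(lam) U^T with U orthonormal and put Y = U^T X. Then
  E = s a - X X^T is conjugate to s diag(lam) - Y Y^T, whose characteristic polynomial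
  follows from the matrix determinant lemma, and T_j(a) is conjugate to
  diag(sigma_j(lam|l)), where lam|l omits lam_l. Hence
    sigma_i(E) = s^i sigma_i(lam) - s^(i-1) sum_l Y_l^2 sigma_(i-1)(lam|l),
    <T_(i-1)(a), X X^T> = sum_l Y_l^2 sigma_(i-1)(lam|l),
  which is the formula for f_i. The lower bound for sigma_(i-1)(E) reduces to
    sigma_i(a) <T_(i-2)(a), X X^T> <= sigma_(i-1)(a) <T_(i-1)(a), X X^T>.
  Expanding sigma_j(lam) = sigma_j(lam|l) + lam_l sigma_(j-1)(lam|l), the l-th terms
  differ by Y_l^2 times sigma_(i-1)(mu)^2 - sigma_(i-2)(mu) sigma_i(mu) with mu = lam|l,
  which is nonnegative by Newton's inequality. Newton's inequality holds for the
  coefficients of every real-rooted polynomial, since by Rolle's theorem derivatives of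
  real-rooted polynomials are real-rooted. Finally sigma_k(E) > 0 propagates downwards
  through the lower bound, so E lies in Gamma_k^+.
*)
theory Submission
  imports Defs "Jordan_Normal_Form.Schur_Decomposition"
begin

section \<open>Real-rooted polynomials and Newton's inequality\<close>

definition real_rooted :: "real poly \<Rightarrow> bool" where
  "real_rooted p \<longleftrightarrow> (\<exists>c rs. p = Polynomial.smult c (\<Prod>r\<leftarrow>rs. [:-r, 1:]))"

lemma real_rooted_linear_mult:
  assumes "real_rooted p" shows "real_rooted ([:-a, 1:] * p)"
proof -
  obtain c rs where "p = Polynomial.smult c (\<Prod>r\<leftarrow>rs. [:-r, 1:])"
    using assms unfolding real_rooted_def by blast
  then have "[:-a, 1:] * p = Polynomial.smult c (\<Prod>r\<leftarrow>a # rs. [:-r, 1:])"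
    by (simp add: mult_smult_right)
  then show ?thesis unfolding real_rooted_def by blast
qed

lemma real_rooted_smult:
  assumes "real_rooted p" shows "real_rooted (Polynomial.smult d p)"
proof -
  obtain c rs where "p = Polynomial.smult c (\<Prod>r\<leftarrow>rs. [:-r, 1:])"
    using assms unfolding real_rooted_def by blast
  then have "Polynomial.smult d p = Polynomial.smult (d * c) (\<Prod>r\<leftarrow>rs. [:-r, 1:])"
    by simp
  then show ?thesis unfolding real_rooted_def by blast
qed

lemma real_rooted_affine_mult: "real_rooted p \<Longrightarrow> real_rooted ([:1, a:] * p)"
proof (cases "a = 0")
  case False
  assume "real_rooted p"
  have "[:1, a:] = Polynomial.smult a [:- (- 1 / a), 1:]"
    using False by simp
  then have "[:1, a:] * p = Polynomial.smult a ([:- (- 1 / a), 1:] * p)"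
    by (simp only: mult_smult_left)
  then show ?thesis
    using \<open>real_rooted p\<close> by (metis real_rooted_linear_mult real_rooted_smult)
qed (simp add: one_pCons[symmetric])

lemma real_rooted_coeff_inequality:
  assumes "real_rooted p"
  shows "2 * coeff p 0 * coeff p 2 \<le> (coeff p 1)\<^sup>2"
proof -
  obtain c rs where p: "p = Polynomial.smult c (\<Prod>r\<leftarrow>rs. [:-r, 1:])"
    using assms unfolding real_rooted_def by blast
  define q where "q = (\<Prod>r\<leftarrow>rs. [:-r, 1:] :: real poly)"
  have "2 * coeff q 0 * coeff q 2 \<le> (coeff q 1)\<^sup>2"
    unfolding q_def
  proof (induction rs)
    case (Cons r rs)
    define A B C where "A = coeff (\<Prod>r\<leftarrow>rs. [:-r, 1:]) 0" and "B = coeff (\<Prod>r\<leftarrow>rs. [:-r, 1:]) 1"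
      and "C = coeff (\<Prod>r\<leftarrow>rs. [:-r, 1:] :: real poly) 2"
    have "(A - r * B)\<^sup>2 - 2 * (- r * A) * (B - r * C) = A\<^sup>2 + r\<^sup>2 * (B\<^sup>2 - 2 * A * C)"
      by (simp add: power2_eq_square algebra_simps)
    also have "\<dots> \<ge> 0"
      using Cons.IH unfolding A_def B_def C_def by simp
    finally show ?case
      by (simp add: A_def B_def C_def coeff_mult numeral_2_eq_2)
  qed simp
  then have "c\<^sup>2 * (2 * coeff q 0 * coeff q 2) \<le> c\<^sup>2 * (coeff q 1)\<^sup>2"
    by (simp add: mult_left_mono)
  then show ?thesis
    by (simp add: p q_def[symmetric] power2_eq_square mult_ac)
qed

lemma real_rooted_if_degree_le_sum_order:
  fixes q :: "real poly"
  assumes "q \<noteq> 0" "finite S" "degree q \<le> (\<Sum>x\<in>S. Polynomial.order x q)"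
  shows "real_rooted q"
  using assms
proof (induction "degree q" arbitrary: q)
  case 0
  then have "q = Polynomial.smult (coeff q 0) (\<Prod>r\<leftarrow>[]. [:-r, 1:])"
    by (simp add: const_poly_dvd_iff degree_0_id)
  then show ?case unfolding real_rooted_def by blast
next
  case (Suc d q)
  obtain a where "a \<in> S" and "Polynomial.order a q \<noteq> 0"
    using Suc.hyps(2) Suc.prems(3) by (metis not_less_eq_eq sum.neutral zero_le)
  then have "[:-a, 1:] dvd q"
    using order_root poly_eq_0_iff_dvd by blast
  then obtain r where qr: "q = [:-a, 1:] * r" by (elim dvdE)
  have "r \<noteq> 0" using Suc.prems(1) qr by auto
  have "degree q = 1 + degree r"
    unfolding qr using \<open>r \<noteq> 0\<close> by (subst degree_mult_eq) auto
  then have "degree r = d"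
    using Suc.hyps(2) by simp
  have "Polynomial.order x q = Polynomial.order x [:-a, 1:] + Polynomial.order x r" for x
    using Suc.prems(1) unfolding qr by (rule order_mult)
  then have "Polynomial.order x q = (if x = a then 1 else 0) + Polynomial.order x r" for x
    by (simp add: order_linear')
  then have "(\<Sum>x\<in>S. Polynomial.order x q) = 1 + (\<Sum>x\<in>S. Polynomial.order x r)"
    using \<open>a \<in> S\<close> Suc.prems(2) by (simp add: sum.distrib)
  then have "degree r \<le> (\<Sum>x\<in>S. Polynomial.order x r)"
    using Suc.prems(3) \<open>degree q = 1 + degree r\<close> by simp
  then have "real_rooted r"
    using Suc.hyps(1) \<open>degree r = d\<close> \<open>r \<noteq> 0\<close> Suc.prems(2) by simp
  then show ?case
    unfolding qr by (rule real_rooted_linear_mult)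
qed

text \<open>The points of \<open>Y\<close> are Rolle points strictly between consecutive elements of \<open>R\<close>.\<close>
lemma pderiv_roots_interlace:
  fixes p :: "real poly"
  assumes "finite R" "\<forall>x\<in>R. poly p x = 0"
  shows "\<exists>Y. finite Y \<and> card R \<le> card Y + 1 \<and> Y \<inter> R = {} \<and>
           (\<forall>y\<in>Y. y < Max R \<and> poly (pderiv p) y = 0)"
  using assms
proof (induction R rule: finite_linorder_max_induct)
  case (insert b R)
  show ?case
  proof (cases "R = {}")
    case False
    obtain Y where Y: "finite Y" "card R \<le> card Y + 1" "Y \<inter> R = {}"
      "\<forall>y\<in>Y. y < Max R \<and> poly (pderiv p) y = 0"
      using insert by auto
    have "Max R < b" "\<forall>x\<in>R. x \<le> Max R"
      using insert.hyps False by auto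
    moreover have "Max R \<in> R" using insert.hyps(1) False by simp
    ultimately obtain z where z: "Max R < z" "z < b" "poly (pderiv p) z = 0"
      using poly_MVT[of "Max R" b p] insert.prems by auto
    have Max: "Max (insert b R) = b"
      using insert.hyps by (intro Max_eqI) auto
    have "z \<notin> Y" "z \<notin> R" "b \<notin> Y" "b \<notin> R"
      using Y(4) z \<open>Max R < b\<close> \<open>\<forall>x\<in>R. x \<le> Max R\<close> by force+
    then show ?thesis
      using Y z \<open>Max R < b\<close> insert.hyps(1)
      by (intro exI[of _ "insert z Y"]) (auto simp: Max)
  qed (auto intro: exI[of _ "{}"])
qed (auto intro: exI[of _ "{}"])

lemma order_linear_factors:
  "Polynomial.order x (\<Prod>r\<leftarrow>rs. [:-r, 1:] :: real poly) = count_list rs x"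
proof (induction rs)
  case (Cons r rs)
  have "[:-r, 1:] * (\<Prod>r\<leftarrow>rs. [:-r, 1:] :: real poly) \<noteq> 0"
    using prod_list_zero_iff[of "map (\<lambda>r. [:-r, 1:]) (r # rs)"] by auto
  then have "Polynomial.order x (\<Prod>r\<leftarrow>r # rs. [:-r, 1:])
      = Polynomial.order x [:-r, 1:] + Polynomial.order x (\<Prod>r\<leftarrow>rs. [:-r, 1:])"
    using order_mult[OF \<open>[:-r, 1:] * (\<Prod>r\<leftarrow>rs. [:-r, 1:]) \<noteq> 0\<close>] by simp
  then show ?case
    using Cons.IH by (simp add: order_linear')
qed simp

lemma degree_pderiv_le_sum_order:
  fixes p :: "real poly"
  assumes p: "p \<noteq> 0" and R: "finite R" "\<forall>x\<in>R. poly p x = 0"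
    and deg: "degree p \<le> (\<Sum>x\<in>R. Polynomial.order x p)"
  shows "\<exists>S. finite S \<and> degree (pderiv p) \<le> (\<Sum>x\<in>S. Polynomial.order x (pderiv p))"
proof (cases "pderiv p = 0")
  case False
  obtain Y where Y: "finite Y" "card R \<le> card Y + 1" "Y \<inter> R = {}"
    "\<forall>y\<in>Y. y < Max R \<and> poly (pderiv p) y = 0"
    using pderiv_roots_interlace[OF R] by blast
  have "(\<Sum>x\<in>R. Polynomial.order x p) = (\<Sum>x\<in>R. Suc (Polynomial.order x (pderiv p)))"
    using order_pderiv[OF p] R(2) by (intro sum.cong) auto
  then have "degree p \<le> (\<Sum>x\<in>R. Polynomial.order x (pderiv p)) + card R"
    using deg by (simp add: sum_Suc)
  moreover have "card Y \<le> (\<Sum>x\<in>Y. Polynomial.order x (pderiv p))"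
    using sum_mono[of Y "\<lambda>_. 1::nat" "\<lambda>x. Polynomial.order x (pderiv p)"] Y(4) False
    by (simp add: Suc_le_eq order_gt_0_iff)
  moreover have "(\<Sum>x\<in>R \<union> Y. Polynomial.order x (pderiv p))
      = (\<Sum>x\<in>R. Polynomial.order x (pderiv p)) + (\<Sum>x\<in>Y. Polynomial.order x (pderiv p))"
    using R(1) Y(1,3) by (subst sum.union_disjoint) auto
  ultimately have "degree (pderiv p) \<le> (\<Sum>x\<in>R \<union> Y. Polynomial.order x (pderiv p))"
    using Y(2) by (simp add: degree_pderiv)
  then show ?thesis
    using R(1) Y(1) by blast
next
  case True
  then show ?thesis by (intro exI[of _ "{}"]) simp
qed

lemma real_rooted_pderiv:
  assumes "real_rooted p"
  shows "real_rooted (pderiv p)"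
proof (cases "pderiv p = 0")
  case True
  then have "pderiv p = Polynomial.smult 0 (\<Prod>r\<leftarrow>[]. [:-r, 1:])" by simp
  then show ?thesis unfolding real_rooted_def by blast
next
  case False
  obtain c rs where "p = Polynomial.smult c (\<Prod>r\<leftarrow>rs. [:-r, 1:])"
    using assms unfolding real_rooted_def by blast
  moreover define P where "P = (\<Prod>r\<leftarrow>rs. [:-r, 1:] :: real poly)"
  ultimately have p: "p = Polynomial.smult c P" by simp
  have "p \<noteq> 0"
    using False by auto
  then have "c \<noteq> 0"
    unfolding p by auto
  have "degree P = length rs"
    unfolding P_def by (rule degree_linear_factors)
  have ord: "Polynomial.order x p = count_list rs x" for x
    unfolding p P_def using \<open>c \<noteq> 0\<close> by (simp add: order_smult order_linear_factors)
  have "degree p = length rs"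
    using \<open>c \<noteq> 0\<close> \<open>degree P = length rs\<close> by (simp add: p)
  also have "length rs = (\<Sum>x\<in>set rs. Polynomial.order x p)"
    unfolding ord by (rule sum_count_set[symmetric]) auto
  finally have deg: "degree p \<le> (\<Sum>x\<in>set rs. Polynomial.order x p)"
    by simp
  have roots: "\<forall>x\<in>set rs. poly p x = 0"
    using \<open>p \<noteq> 0\<close> order_root[of p] by (simp add: ord count_list_0_iff)
  obtain S where "finite S" "degree (pderiv p) \<le> (\<Sum>x\<in>S. Polynomial.order x (pderiv p))"
    using degree_pderiv_le_sum_order[OF \<open>p \<noteq> 0\<close> finite_set roots deg] by blast
  then show ?thesis
    using real_rooted_if_degree_le_sum_order[OF False] by blast
qed

lemma coeff_higher_pderiv:
  fixes p :: "real poly"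
  shows "coeff ((pderiv ^^ k) p) i * fact i = fact (i + k) * coeff p (i + k)"
proof (induction k arbitrary: i)
  case (Suc k)
  have "coeff ((pderiv ^^ Suc k) p) i * fact i = coeff ((pderiv ^^ k) p) (Suc i) * fact (Suc i)"
    by (simp add: coeff_pderiv algebra_simps)
  also have "\<dots> = fact (i + Suc k) * coeff p (i + Suc k)"
    using Suc.IH[of "Suc i"] by simp
  finally show ?case .
qed simp

theorem newton_inequality_real_rooted:
  assumes "real_rooted p"
  shows "coeff p k * coeff p (k + 2) \<le> (coeff p (k + 1))\<^sup>2"
proof -
  \<comment> \<open>The \<open>k\<close>-th derivative is again real-rooted, and up to factorials its three lowest
    coefficients are those of \<open>p\<close> at \<open>k\<close>, \<open>k + 1\<close> and \<open>k + 2\<close>.\<close>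
  define q where "q = (pderiv ^^ k) p"
  have "real_rooted q"
    unfolding q_def using assms by (induction k) (auto intro: real_rooted_pderiv)
  then have ineq: "2 * coeff q 0 * coeff q 2 \<le> (coeff q 1)\<^sup>2"
    by (rule real_rooted_coeff_inequality)
  define F where "F = (fact k :: real)"
  have c0: "coeff q 0 = F * coeff p k"
    and c1: "coeff q 1 = (real k + 1) * F * coeff p (k + 1)"
    and c2: "2 * coeff q 2 = (real k + 2) * (real k + 1) * F * coeff p (k + 2)"
    using coeff_higher_pderiv[of k p 0] coeff_higher_pderiv[of k p 1] coeff_higher_pderiv[of k p 2]
    by (simp_all add: q_def F_def add.commute numeral_2_eq_2 algebra_simps)
  have "(F\<^sup>2 * (real k + 1)) * ((real k + 2) * (coeff p k * coeff p (k + 2)))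
      = coeff q 0 * (2 * coeff q 2)"
    unfolding c0 c2 by (simp add: power2_eq_square mult_ac)
  also have "\<dots> \<le> (coeff q 1)\<^sup>2"
    using ineq by simp
  also have "\<dots> = (F\<^sup>2 * (real k + 1)) * ((real k + 1) * (coeff p (k + 1))\<^sup>2)"
    unfolding c1 by (simp add: power2_eq_square mult_ac)
  finally have "(F\<^sup>2 * (real k + 1)) * ((real k + 2) * (coeff p k * coeff p (k + 2)))
      \<le> (F\<^sup>2 * (real k + 1)) * ((real k + 1) * (coeff p (k + 1))\<^sup>2)" .
  moreover have "F > 0" unfolding F_def by simp
  ultimately have main: "(real k + 2) * (coeff p k * coeff p (k + 2)) \<le> (real k + 1) * (coeff p (k + 1))\<^sup>2"
    by (simp add: mult_le_cancel_left_pos)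
  show ?thesis
  proof (cases "coeff p k * coeff p (k + 2) \<le> 0")
    case False
    then have "(real k + 1) * (coeff p k * coeff p (k + 2))
        \<le> (real k + 2) * (coeff p k * coeff p (k + 2))"
      by (simp add: mult_right_mono)
    then have "(real k + 1) * (coeff p k * coeff p (k + 2)) \<le> (real k + 1) * (coeff p (k + 1))\<^sup>2"
      using main by linarith
    then show ?thesis
      by (simp add: mult_le_cancel_left_pos)
  qed (simp add: order_trans[OF _ zero_le_power2])
qed

section \<open>Elementary symmetric functions\<close>

definition elem_sym :: "('a \<Rightarrow> real) \<Rightarrow> 'a set \<Rightarrow> nat \<Rightarrow> real" where
  "elem_sym f A j = coeff (\<Prod>i\<in>A. [:1, f i:]) j"

lemma elem_sym_0 [simp]: "elem_sym f A 0 = 1"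
  by (simp add: elem_sym_def poly_0_coeff_0[symmetric] poly_prod)

lemma elem_sym_Suc_remove:
  assumes "finite A" "l \<in> A"
  shows "elem_sym f A (Suc j) = elem_sym f (A - {l}) (Suc j) + f l * elem_sym f (A - {l}) j"
  unfolding elem_sym_def prod.remove[OF assms] by (simp add: coeff_mult)

lemma elem_sym_scale: "elem_sym (\<lambda>i. c * f i) A j = c ^ j * elem_sym f A j"
proof -
  have "(\<Prod>i\<in>A. [:1, c * f i:]) = pcompose (\<Prod>i\<in>A. [:1, f i:]) [:0, c:]"
    by (simp add: pcompose_prod pcompose_pCons mult.commute)
  then show ?thesis
    by (simp add: elem_sym_def coeff_pcompose_linear)
qed

lemma elem_sym_eq_0:
  assumes "finite A" "card A < j"
  shows "elem_sym f A j = 0"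
proof -
  have "degree (\<Prod>i\<in>A. [:1, f i:]) \<le> (\<Sum>i\<in>A. degree [:1, f i:])"
    using degree_prod_sum_le[OF assms(1), of "\<lambda>i. [:1, f i:]"] unfolding comp_def .
  also have "\<dots> \<le> card A"
    using sum_mono[of A "\<lambda>i. degree [:1, f i:]" "\<lambda>_. 1"] by simp
  finally have "degree (\<Prod>i\<in>A. [:1, f i:]) \<le> card A" .
  then show ?thesis
    unfolding elem_sym_def using assms(2) by (simp add: coeff_eq_0)
qed

lemma coeff_prod_linear_factors:
  assumes "finite A" "j \<le> card A"
  shows "coeff (\<Prod>i\<in>A. [:- f i, 1:]) (card A - j) = (-1) ^ j * elem_sym f A j"
proof -
  have "degree (\<Prod>i\<in>A. [:- f i, 1:]) = card A"
    using assms(1) by (subst degree_prod_sum_eq) auto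
  moreover have "reflect_poly [:- f i, 1:] = [:1, -1 * f i:]" for i
    by (simp add: reflect_poly_pCons' monom_Suc monom_0)
  then have "reflect_poly (\<Prod>i\<in>A. [:- f i, 1:]) = (\<Prod>i\<in>A. [:1, -1 * f i:])"
    by (simp add: reflect_poly_prod)
  ultimately have "coeff (\<Prod>i\<in>A. [:- f i, 1:]) (card A - j) = elem_sym (\<lambda>i. -1 * f i) A j"
    using assms(2) coeff_reflect_poly[of "\<Prod>i\<in>A. [:- f i, 1:]" j] by (simp add: elem_sym_def)
  then show ?thesis
    using elem_sym_scale[of "-1" f A j] by simp
qed

lemma elem_sym_remove_alternating_sum:
  assumes "finite A" "l \<in> A"
  shows "(\<Sum>i\<le>j. (-1) ^ i * elem_sym f A (j - i) * f l ^ i) = elem_sym f (A - {l}) j"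
proof (induction j)
  case (Suc j)
  have "(\<Sum>i\<le>Suc j. (-1) ^ i * elem_sym f A (Suc j - i) * f l ^ i)
      = elem_sym f A (Suc j) + (\<Sum>i\<le>j. (-1) ^ Suc i * elem_sym f A (j - i) * f l ^ Suc i)"
    by (subst sum.atMost_Suc_shift) simp
  also have "(\<Sum>i\<le>j. (-1) ^ Suc i * elem_sym f A (j - i) * f l ^ Suc i)
      = - f l * (\<Sum>i\<le>j. (-1) ^ i * elem_sym f A (j - i) * f l ^ i)"
    by (simp add: sum_distrib_left algebra_simps)
  finally show ?case
    using Suc.IH elem_sym_Suc_remove[OF assms, of f j] by simp
qed simp

lemma real_rooted_prod_affine: "real_rooted (\<Prod>i\<in>A. [:1, f i:])"
proof (cases "finite A")
  case True
  then show ?thesis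
  proof (induction A rule: finite_induct)
    case empty
    have "(\<Prod>i\<in>{}. [:1, f i:]) = Polynomial.smult 1 (\<Prod>r\<leftarrow>[]. [:-r, 1:])" by simp
    then show ?case unfolding real_rooted_def by blast
  next
    case (insert x F)
    show ?case
      unfolding prod.insert[OF insert.hyps] by (rule real_rooted_affine_mult[OF insert.IH])
  qed
next
  case False
  have "(\<Prod>i\<in>A. [:1, f i:]) = Polynomial.smult 1 (\<Prod>r\<leftarrow>[]. [:-r, 1:])" using False by simp
  then show ?thesis unfolding real_rooted_def by blast
qed

lemma elem_sym_newton_inequality:
  "elem_sym f A j * elem_sym f A (j + 2) \<le> (elem_sym f A (j + 1))\<^sup>2"
  unfolding elem_sym_def by (rule newton_inequality_real_rooted[OF real_rooted_prod_affine])

lemma elem_sym_remove_cross_inequality: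
  assumes "finite A" "l \<in> A"
  shows "elem_sym f A (j + 2) * elem_sym f (A - {l}) j
    \<le> elem_sym f A (j + 1) * elem_sym f (A - {l}) (j + 1)"
proof -
  let ?e = "elem_sym f (A - {l})"
  have "elem_sym f A (j + 1) * ?e (j + 1) - elem_sym f A (j + 2) * ?e j = (?e (j + 1))\<^sup>2 - ?e j * ?e (j + 2)"
    using elem_sym_Suc_remove[OF assms, of f j] elem_sym_Suc_remove[OF assms, of f "Suc j"]
    by (simp add: power2_eq_square algebra_simps)
  then show ?thesis
    using elem_sym_newton_inequality[of f "A - {l}" j] by simp
qed

section \<open>Diagonal matrices minus rank-one matrices\<close>

lemma det_one_plus_mult_commute:
  fixes B C :: "'a :: idom mat"
  assumes B: "B \<in> carrier_mat n m" and C: "C \<in> carrier_mat m n"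
  shows "det (1\<^sub>m n + B * C) = det (1\<^sub>m m + C * B)"
proof -
  have CB: "C * B \<in> carrier_mat m m" and BC: "B * C \<in> carrier_mat n n"
    using B C by auto
  define M where "M = four_block_mat (1\<^sub>m n) (- B) C (1\<^sub>m m)"
  have "four_block_mat (1\<^sub>m n) (0\<^sub>m n m) C (1\<^sub>m m) * four_block_mat (1\<^sub>m n) (- B) (0\<^sub>m m n) (1\<^sub>m m + C * B)
      = four_block_mat (1\<^sub>m n * 1\<^sub>m n + 0\<^sub>m n m * 0\<^sub>m m n) (1\<^sub>m n * - B + 0\<^sub>m n m * (1\<^sub>m m + C * B))
          (C * 1\<^sub>m n + 1\<^sub>m m * 0\<^sub>m m n) (C * - B + 1\<^sub>m m * (1\<^sub>m m + C * B))"
    using B C CB by (intro mult_four_block_mat) auto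
  also have "\<dots> = M"
    unfolding M_def using B C CB by (intro cong_four_block_mat) (auto intro!: eq_matI)
  finally have M1: "M = four_block_mat (1\<^sub>m n) (0\<^sub>m n m) C (1\<^sub>m m)
      * four_block_mat (1\<^sub>m n) (- B) (0\<^sub>m m n) (1\<^sub>m m + C * B)" ..
  have "four_block_mat (1\<^sub>m n) (- B) (0\<^sub>m m n) (1\<^sub>m m) * four_block_mat (1\<^sub>m n + B * C) (0\<^sub>m n m) C (1\<^sub>m m)
      = four_block_mat (1\<^sub>m n * (1\<^sub>m n + B * C) + - B * C) (1\<^sub>m n * 0\<^sub>m n m + - B * 1\<^sub>m m)
          (0\<^sub>m m n * (1\<^sub>m n + B * C) + 1\<^sub>m m * C) (0\<^sub>m m n * 0\<^sub>m n m + 1\<^sub>m m * 1\<^sub>m m)"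
    using B C BC by (intro mult_four_block_mat) auto
  also have "\<dots> = M"
    unfolding M_def using B C BC by (intro cong_four_block_mat) (auto intro!: eq_matI)
  finally have M2: "M = four_block_mat (1\<^sub>m n) (- B) (0\<^sub>m m n) (1\<^sub>m m)
      * four_block_mat (1\<^sub>m n + B * C) (0\<^sub>m n m) C (1\<^sub>m m)" ..
  have L1: "det (four_block_mat (1\<^sub>m n) (0\<^sub>m n m) C (1\<^sub>m m)) = 1"
    using det_four_block_mat_upper_right_zero[OF one_carrier_mat refl C one_carrier_mat] by simp
  have R1: "det (four_block_mat (1\<^sub>m n) (- B) (0\<^sub>m m n) (1\<^sub>m m + C * B)) = det (1\<^sub>m m + C * B)"
    using det_four_block_mat_lower_left_zero[of "1\<^sub>m n" n "- B" m "0\<^sub>m m n" "1\<^sub>m m + C * B"] B CB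
    by simp
  have L2: "det (four_block_mat (1\<^sub>m n) (- B) (0\<^sub>m m n) (1\<^sub>m m)) = 1"
    using det_four_block_mat_lower_left_zero[of "1\<^sub>m n" n "- B" m "0\<^sub>m m n" "1\<^sub>m m"] B by simp
  have R2: "det (four_block_mat (1\<^sub>m n + B * C) (0\<^sub>m n m) C (1\<^sub>m m)) = det (1\<^sub>m n + B * C)"
    using det_four_block_mat_upper_right_zero[of "1\<^sub>m n + B * C" n "0\<^sub>m n m" m C "1\<^sub>m m"] BC C
    by simp
  have "det (1\<^sub>m m + C * B) = det M"
    unfolding M1 using B C CB L1 R1 by (subst det_mult[of _ "n + m"]) auto
  also have "\<dots> = det (1\<^sub>m n + B * C)"
    unfolding M2 using B C BC L2 R2 by (subst det_mult[of _ "n + m"]) auto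
  finally show ?thesis by simp
qed

lemma dim_mat_diag [simp]: "dim_row (mat_diag n f) = n" "dim_col (mat_diag n f) = n"
  by (simp_all add: mat_diag_def)

lemma det_mat_diag: "det (mat_diag n d) = (\<Prod>i<n. d i)"
proof -
  have "diag_mat (mat_diag n d) = map d [0..<n]"
    by (simp add: diag_mat_def mat_diag_def)
  then have "det (mat_diag n d) = prod_list (map d [0..<n])"
    by (subst det_upper_triangular[of _ n]) (auto simp: mat_diag_def upper_triangular_def)
  also have "\<dots> = (\<Prod>i<n. d i)"
    by (simp add: prod.distinct_set_conv_list[symmetric] atLeast0LessThan)
  finally show ?thesis .
qed

lemma outer_carrier [simp]: "X \<in> carrier_vec n \<Longrightarrow> outer X \<in> carrier_mat n n"
  by (simp add: outer_def)

lemma dim_outer [simp]: "dim_row (outer X) = dim_vec X" "dim_col (outer X) = dim_vec X"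
  by (simp_all add: outer_def)

lemma index_outer [simp]: "i < dim_vec X \<Longrightarrow> j < dim_vec X \<Longrightarrow> outer X $$ (i, j) = X $ i * X $ j"
  by (simp add: outer_def)

lemma det_mat_diag_plus_outer:
  fixes y :: "real vec"
  assumes y: "y \<in> carrier_vec n" and d: "\<And>i. i < n \<Longrightarrow> d i \<noteq> 0"
  shows "det (mat_diag n d + outer y) = (\<Prod>i<n. d i) * (1 + (\<Sum>l<n. (y $ l)\<^sup>2 / d l))"
proof -
  define x where "x = vec n (\<lambda>i. y $ i / d i)"
  define B C where "B = mat_of_cols n [x]" and "C = mat_of_row y"
  have B: "B \<in> carrier_mat n 1" and C: "C \<in> carrier_mat 1 n"
    using y by (auto simp: B_def C_def)
  have "mat_diag n d + outer y = mat_diag n d * (1\<^sub>m n + B * C)"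
    using y B C d by (subst mat_diag_mult_left[of _ n n]) (auto intro!: eq_matI
        simp: B_def C_def x_def mat_diag_def mat_of_cols_def scalar_prod_def field_simps)
  then have "det (mat_diag n d + outer y) = (\<Prod>i<n. d i) * det (1\<^sub>m 1 + C * B)"
    using B C by (simp add: det_mult[of _ n] det_mat_diag det_one_plus_mult_commute[OF B C])
  also have "det (1\<^sub>m 1 + C * B) = 1 + y \<bullet> x"
    using B C y by (subst det_single) (auto simp: B_def C_def x_def col_mat_of_cols)
  also have "y \<bullet> x = (\<Sum>l<n. (y $ l)\<^sup>2 / d l)"
    using y by (simp add: x_def scalar_prod_def atLeast0LessThan power2_eq_square)
  finally show ?thesis .
qed

lemma poly_eqI_off_finite:
  fixes p q :: "real poly"
  assumes "finite F" and "\<And>t. t \<notin> F \<Longrightarrow> poly p t = poly q t"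
  shows "p = q"
proof (rule ccontr)
  assume "p \<noteq> q"
  then have "finite {t. poly (p - q) t = 0}"
    by (intro poly_roots_finite) simp
  moreover have "- F \<subseteq> {t. poly (p - q) t = 0}"
    using assms(2) by auto
  moreover have "infinite (- F)"
    using assms(1) by (simp add: Compl_eq_Diff_UNIV infinite_UNIV_char_0)
  ultimately show False
    using finite_subset by blast
qed

lemma char_poly_mat_diag_minus_outer:
  fixes y :: "real vec"
  assumes y: "y \<in> carrier_vec n"
  shows "char_poly (mat_diag n g - outer y)
    = (\<Prod>i<n. [:- g i, 1:]) + (\<Sum>l<n. Polynomial.smult ((y $ l)\<^sup>2) (\<Prod>i\<in>{..<n} - {l}. [:- g i, 1:]))"
proof (rule poly_eqI_off_finite[of "g ` {..<n}"])
  fix t assume t: "t \<notin> g ` {..<n}"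
  then have nz: "\<And>i. i < n \<Longrightarrow> t - g i \<noteq> 0" by auto
  have "mat_diag n g - outer y \<in> carrier_mat n n"
    using y by (intro minus_carrier_mat) simp
  then have "poly (char_poly (mat_diag n g - outer y)) t = det (- char_matrix (mat_diag n g - outer y) t)"
    by (rule char_poly_matrix)
  also have "- char_matrix (mat_diag n g - outer y) t = mat_diag n (\<lambda>i. t - g i) + outer y"
    using y by (intro eq_matI) (auto simp: char_matrix_def mat_diag_def)
  also have "det (mat_diag n (\<lambda>i. t - g i) + outer y)
      = (\<Prod>i<n. t - g i) + (\<Sum>l<n. (\<Prod>i<n. t - g i) * ((y $ l)\<^sup>2 / (t - g l)))"
    using det_mat_diag_plus_outer[OF y nz] by (simp only: distrib_left sum_distrib_left mult_1_right)
  also have "\<dots> = (\<Prod>i<n. t - g i) + (\<Sum>l<n. (y $ l)\<^sup>2 * (\<Prod>i\<in>{..<n} - {l}. t - g i))"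
  proof -
    have "(\<Prod>i<n. t - g i) * ((y $ l)\<^sup>2 / (t - g l)) = (y $ l)\<^sup>2 * (\<Prod>i\<in>{..<n} - {l}. t - g i)"
      if "l < n" for l
      using that nz[OF that] by (simp add: prod.remove[of "{..<n}" l])
    then show ?thesis by simp
  qed
  finally show "poly (char_poly (mat_diag n g - outer y)) t
    = poly ((\<Prod>i<n. [:- g i, 1:]) + (\<Sum>l<n. Polynomial.smult ((y $ l)\<^sup>2) (\<Prod>i\<in>{..<n} - {l}. [:- g i, 1:]))) t"
    by (simp add: poly_sum poly_prod)
qed simp

lemma sigma_mat_diag_minus_outer:
  fixes y :: "real vec"
  assumes y: "y \<in> carrier_vec n" and j: "1 \<le> j"
  shows "sigma j (mat_diag n g - outer y)
    = elem_sym g {..<n} j - (\<Sum>l<n. (y $ l)\<^sup>2 * elem_sym g ({..<n} - {l}) (j - 1))"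
proof (cases "j \<le> n")
  case True
  have main: "(-1) ^ j * coeff (\<Prod>i<n. [:- g i, 1:]) (n - j) = elem_sym g {..<n} j"
    using coeff_prod_linear_factors[of "{..<n}" j g] True by simp
  have minor: "(-1) ^ j * coeff (\<Prod>i\<in>{..<n} - {l}. [:- g i, 1:]) (n - j)
      = - elem_sym g ({..<n} - {l}) (j - 1)" if "l < n" for l
  proof -
    have "n - j = card ({..<n} - {l}) - (j - 1)" "j - 1 \<le> card ({..<n} - {l})"
      using that True j by auto
    moreover have "(-1 :: real) ^ j = - ((-1) ^ (j - 1))"
      using j by (cases j) auto
    ultimately show ?thesis
      using coeff_prod_linear_factors[of "{..<n} - {l}" "j - 1" g] by simp
  qed
  have "(\<Sum>l<n. (y $ l)\<^sup>2 * ((-1) ^ j * coeff (\<Prod>i\<in>{..<n} - {l}. [:- g i, 1:]) (n - j)))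
      = - (\<Sum>l<n. (y $ l)\<^sup>2 * elem_sym g ({..<n} - {l}) (j - 1))"
    using minor by (simp add: sum_negf)
  with main have "(-1) ^ j * coeff (char_poly (mat_diag n g - outer y)) (n - j)
    = elem_sym g {..<n} j - (\<Sum>l<n. (y $ l)\<^sup>2 * elem_sym g ({..<n} - {l}) (j - 1))"
    unfolding char_poly_mat_diag_minus_outer[OF y] coeff_add coeff_sum coeff_smult
    by (simp add: distrib_left sum_distrib_left mult.left_commute)
  then show ?thesis
    using y True by (simp add: sigma_def)
next
  case False
  then have "elem_sym g ({..<n} - {l}) (j - 1) = 0" if "l < n" for l
    using that by (intro elem_sym_eq_0) auto
  then have "(\<Sum>l<n. (y $ l)\<^sup>2 * elem_sym g ({..<n} - {l}) (j - 1)) = 0"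
    by (intro sum.neutral) simp
  moreover have "elem_sym g {..<n} j = 0"
    using False by (intro elem_sym_eq_0) auto
  ultimately show ?thesis
    using False y by (simp add: sigma_def)
qed

lemma sigma_mat_diag: "sigma j (mat_diag n g) = elem_sym g {..<n} j"
proof (cases "j = 0")
  case True
  have "monic (char_poly (mat_diag n g))" "degree (char_poly (mat_diag n g)) = n"
    using degree_monic_char_poly[of "mat_diag n g" n] by auto
  then show ?thesis
    using True by (simp add: sigma_def)
next
  case False
  have "mat_diag n g - outer (0\<^sub>v n) = mat_diag n g"
    by (auto intro!: eq_matI simp: mat_diag_def)
  then have "sigma j (mat_diag n g) = sigma j (mat_diag n g - outer (0\<^sub>v n))"
    by simp
  also have "\<dots> = elem_sym g {..<n} j"
    using sigma_mat_diag_minus_outer[of "0\<^sub>v n" n j g] False by simp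
  finally show ?thesis .
qed

section \<open>Orthonormal matrices and the spectral theorem\<close>

text \<open>Not the library's \<open>orthogonal_mat\<close>, which only asks for pairwise orthogonal columns.\<close>
definition orthonormal_mat :: "nat \<Rightarrow> 'a :: field mat \<Rightarrow> bool" where
  "orthonormal_mat n U \<longleftrightarrow> U \<in> carrier_mat n n \<and> transpose_mat U * U = 1\<^sub>m n"

lemma orthonormal_mat_carrier: "orthonormal_mat n U \<Longrightarrow> U \<in> carrier_mat n n"
  by (simp add: orthonormal_mat_def)

lemma orthonormal_mat_mult_transpose:
  "orthonormal_mat n U \<Longrightarrow> U * transpose_mat U = 1\<^sub>m n"
  unfolding orthonormal_mat_def by (auto intro: mat_mult_left_right_inverse)

lemma orthonormal_mat_mult:
  assumes U: "orthonormal_mat n U" and V: "orthonormal_mat n V"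
  shows "orthonormal_mat n (U * V)"
proof -
  have [simp]: "U \<in> carrier_mat n n" "V \<in> carrier_mat n n"
    "transpose_mat U \<in> carrier_mat n n" "transpose_mat V \<in> carrier_mat n n"
    using U V by (simp_all add: orthonormal_mat_def)
  have "transpose_mat (U * V) * (U * V) = transpose_mat V * (transpose_mat U * U) * V"
    by (simp add: transpose_mult[of U n n V n] assoc_mult_mat[of _ n n _ n _ n]
        mult_carrier_mat[of _ n n _ n])
  also have "\<dots> = 1\<^sub>m n"
    using U V by (simp add: orthonormal_mat_def right_mult_one_mat[of _ n n])
  finally show ?thesis
    by (simp add: orthonormal_mat_def mult_carrier_mat[of _ n n _ n])
qed

lemma mult_four_block_diag_mat:
  assumes "A1 \<in> carrier_mat n1 n1" "A2 \<in> carrier_mat n2 n2"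
    and "B1 \<in> carrier_mat n1 n1" "B2 \<in> carrier_mat n2 n2"
  shows "four_block_mat A1 (0\<^sub>m n1 n2) (0\<^sub>m n2 n1) A2 * four_block_mat B1 (0\<^sub>m n1 n2) (0\<^sub>m n2 n1) B2
    = four_block_mat (A1 * B1) (0\<^sub>m n1 n2) (0\<^sub>m n2 n1) (A2 * B2)"
  using assms by (subst mult_four_block_mat[OF assms(1) zero_carrier_mat zero_carrier_mat assms(2)
        assms(3) zero_carrier_mat zero_carrier_mat assms(4)]) auto

lemma transpose_four_block_diag_mat:
  assumes "A1 \<in> carrier_mat n1 n1" "A2 \<in> carrier_mat n2 n2"
  shows "transpose_mat (four_block_mat A1 (0\<^sub>m n1 n2) (0\<^sub>m n2 n1) A2)
    = four_block_mat (transpose_mat A1) (0\<^sub>m n1 n2) (0\<^sub>m n2 n1) (transpose_mat A2)"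
  using assms by (subst transpose_four_block_mat[OF assms(1) zero_carrier_mat zero_carrier_mat assms(2)]) auto

lemma orthonormal_mat_four_block_diag:
  assumes "orthonormal_mat m V"
  shows "orthonormal_mat (Suc m) (four_block_mat (1\<^sub>m 1) (0\<^sub>m 1 m) (0\<^sub>m m 1) V)"
proof -
  have V: "V \<in> carrier_mat m m" "transpose_mat V * V = 1\<^sub>m m"
    using assms by (simp_all add: orthonormal_mat_def)
  have "four_block_mat (1\<^sub>m 1) (0\<^sub>m 1 m) (0\<^sub>m m 1) V \<in> carrier_mat (Suc m) (Suc m)"
    using four_block_carrier_mat[OF one_carrier_mat[of 1] V(1)] by simp
  moreover have "transpose_mat (four_block_mat (1\<^sub>m 1) (0\<^sub>m 1 m) (0\<^sub>m m 1) V)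
      * four_block_mat (1\<^sub>m 1) (0\<^sub>m 1 m) (0\<^sub>m m 1) V = 1\<^sub>m (Suc m)"
    using V by (simp add: transpose_four_block_diag_mat mult_four_block_diag_mat)
  ultimately show ?thesis
    by (simp add: orthonormal_mat_def)
qed

lemma mult_conj_transpose:
  fixes U V M :: "'a :: comm_semiring_1 mat"
  assumes "U \<in> carrier_mat n n" "V \<in> carrier_mat n n" "M \<in> carrier_mat n n"
  shows "U * (V * M * transpose_mat V) * transpose_mat U = (U * V) * M * transpose_mat (U * V)"
proof -
  have [simp]: "transpose_mat U \<in> carrier_mat n n" "transpose_mat V \<in> carrier_mat n n"
    using assms by simp_all
  show ?thesis
    using assms by (simp add: transpose_mult[of U n n V n] assoc_mult_mat[of _ n n _ n _ n]
        mult_carrier_mat[of _ n n _ n])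
qed

lemma similar_mat_orthonormal_conj:
  assumes "orthonormal_mat n U" "M \<in> carrier_mat n n"
  shows "similar_mat (U * M * transpose_mat U) M"
  using assms orthonormal_mat_mult_transpose[OF assms(1)]
  unfolding similar_mat_def similar_mat_wit_def orthonormal_mat_def Let_def
  by (intro exI[of _ U] exI[of _ "transpose_mat U"]) auto

lemma sigma_orthonormal_conj:
  assumes "orthonormal_mat n U" "M \<in> carrier_mat n n"
  shows "sigma j (U * M * transpose_mat U) = sigma j M"
proof -
  have "dim_row (U * M * transpose_mat U) = dim_row M"
    using carrier_matD(1)[OF orthonormal_mat_carrier[OF assms(1)]] carrier_matD(1)[OF assms(2)] by simp
  then show ?thesis
    using char_poly_similar[OF similar_mat_orthonormal_conj[OF assms]] by (simp add: sigma_def)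
qed

lemma orthonormal_mat_conj_cancel:
  assumes "orthonormal_mat n W" "A \<in> carrier_mat n n"
  shows "W * (transpose_mat W * A * W) * transpose_mat W = A"
proof -
  have [simp]: "W \<in> carrier_mat n n" "transpose_mat W \<in> carrier_mat n n"
    using assms(1) by (simp_all add: orthonormal_mat_def)
  have "W * (transpose_mat W * A * W) * transpose_mat W
      = (W * transpose_mat W) * A * (W * transpose_mat W)"
    using assms(2) by (simp add: assoc_mult_mat[of _ n n _ n _ n] mult_carrier_mat[of _ n n _ n])
  then show ?thesis
    using assms by (simp add: orthonormal_mat_mult_transpose)
qed

lemma symmetric_mat_hermitian_form_real:
  fixes A :: "real mat" and w :: "complex vec"
  assumes "symmetric_mat n A" "w \<in> carrier_vec n"
  shows "Im (\<Sum>i<n. cnj (w $ i) * (map_mat complex_of_real A *\<^sub>v w) $ i) = 0"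
proof -
  have A: "A \<in> carrier_mat n n" and sym: "transpose_mat A = A"
    using assms(1) by (simp_all add: symmetric_mat_def)
  define q where "q = (\<Sum>i<n. cnj (w $ i) * (map_mat complex_of_real A *\<^sub>v w) $ i)"
  have q: "q = (\<Sum>i<n. \<Sum>j<n. cnj (w $ i) * complex_of_real (A $$ (i, j)) * w $ j)"
    unfolding q_def using assms(2) A
    by (intro sum.cong) (auto simp: scalar_prod_def atLeast0LessThan sum_distrib_left mult.assoc)
  have "cnj q = (\<Sum>i<n. \<Sum>j<n. w $ i * complex_of_real (A $$ (i, j)) * cnj (w $ j))"
    unfolding q by (simp add: cnj_sum)
  also have "\<dots> = (\<Sum>j<n. \<Sum>i<n. w $ i * complex_of_real (A $$ (i, j)) * cnj (w $ j))"
    by (rule sum.swap)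
  also have "\<dots> = (\<Sum>j<n. \<Sum>i<n. cnj (w $ j) * complex_of_real (A $$ (j, i)) * w $ i)"
  proof (intro sum.cong refl)
    fix i j assume "j \<in> {..<n}" "i \<in> {..<n}"
    then have "A $$ (i, j) = A $$ (j, i)"
      using sym A by (metis carrier_matD index_transpose_mat(1) lessThan_iff)
    then show "w $ i * complex_of_real (A $$ (i, j)) * cnj (w $ j)
      = cnj (w $ j) * complex_of_real (A $$ (j, i)) * w $ i"
      by simp
  qed
  also have "\<dots> = q" unfolding q ..
  finally have "Im (cnj q) = Im q" by simp
  then have "Im q = 0" by simp
  then show ?thesis by (simp only: q_def)
qed

lemma eigenvector_hermitian_form:
  fixes M :: "complex mat"
  assumes "w \<in> carrier_vec n" "M *\<^sub>v w = a \<cdot>\<^sub>v w"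
  shows "(\<Sum>i<n. cnj (w $ i) * (M *\<^sub>v w) $ i) = a * complex_of_real (\<Sum>i<n. (cmod (w $ i))\<^sup>2)"
proof -
  have "(\<Sum>i<n. cnj (w $ i) * (M *\<^sub>v w) $ i) = (\<Sum>i<n. a * (cnj (w $ i) * w $ i))"
    unfolding assms(2) using assms(1) by (intro sum.cong) auto
  also have "\<dots> = a * (\<Sum>i<n. complex_of_real ((cmod (w $ i))\<^sup>2))"
    unfolding sum_distrib_left
  proof (intro sum.cong refl)
    fix i
    have "cnj (w $ i) * w $ i = complex_of_real ((cmod (w $ i))\<^sup>2)"
      by (metis complex_norm_square mult.commute of_real_power)
    then show "a * (cnj (w $ i) * w $ i) = a * complex_of_real ((cmod (w $ i))\<^sup>2)" by simp
  qed
  finally show ?thesis by simp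
qed

text \<open>A complex eigenvalue \<open>a\<close> with eigenvector \<open>w\<close> satisfies \<open>w\<^sup>* A w = a |w|\<^sup>2\<close>,
  whose left-hand side is real.\<close>
lemma symmetric_mat_has_eigenvalue:
  fixes A :: "real mat"
  assumes "symmetric_mat n A" and n: "0 < n"
  shows "\<exists>e. eigenvalue A e"
proof -
  have A: "A \<in> carrier_mat n n"
    using assms(1) by (simp add: symmetric_mat_def)
  define Ac where "Ac = map_mat complex_of_real A"
  have Ac: "Ac \<in> carrier_mat n n" unfolding Ac_def using A by simp
  obtain as where cp: "char_poly Ac = (\<Prod>a\<leftarrow>as. [:- a, 1:])" and las: "length as = n"
    using char_poly_factorized[OF Ac] by auto
  define a where "a = hd as"
  have "a \<in> set as" unfolding a_def using las n by (cases as) auto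
  then have root: "poly (char_poly Ac) a = 0"
    unfolding cp poly_prod_list by (auto simp: prod_list_zero_iff)
  then have "eigenvalue Ac a"
    using eigenvalue_root_char_poly[OF Ac] by simp
  then obtain w where w: "w \<in> carrier_vec n" "w \<noteq> 0\<^sub>v n" "Ac *\<^sub>v w = a \<cdot>\<^sub>v w"
    unfolding eigenvalue_def eigenvector_def using Ac by auto
  define r where "r = (\<Sum>i<n. (cmod (w $ i))\<^sup>2)"
  have "Im (a * complex_of_real r) = 0"
    using symmetric_mat_hermitian_form_real[OF assms(1) w(1)] eigenvector_hermitian_form[OF w(1,3)]
    unfolding r_def Ac_def by simp
  moreover have "r > 0"
  proof -
    obtain i where i: "i < n" "w $ i \<noteq> 0"
      using w(1,2) by (metis eq_vecI carrier_vecD index_zero_vec)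
    have "(cmod (w $ i))\<^sup>2 \<le> r"
      unfolding r_def by (rule member_le_sum) (use i in auto)
    moreover have "(cmod (w $ i))\<^sup>2 > 0" using i by simp
    ultimately show ?thesis by linarith
  qed
  ultimately have "Im a = 0"
    by simp
  define e where "e = Re a"
  have ae: "a = complex_of_real e"
    unfolding e_def using \<open>Im a = 0\<close> by (simp add: complex_eq_iff)
  have "complex_of_real (poly (char_poly A) e) = poly (char_poly Ac) a"
    unfolding Ac_def ae of_real_hom.char_poly_hom[OF A] of_real_hom.poly_map_poly ..
  then have "poly (char_poly A) e = 0"
    using root by simp
  then show ?thesis
    using eigenvalue_root_char_poly[OF A] by blast
qed

lemma orthonormal_mat_with_first_col:
  fixes u :: "real vec"
  assumes u: "u \<in> carrier_vec n" and u0: "u \<noteq> 0\<^sub>v n"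
  shows "\<exists>W. orthonormal_mat n W \<and> col W 0 = (1 / sqrt (u \<bullet> u)) \<cdot>\<^sub>v u"
proof -
  interpret cof_vec_space n "TYPE(real)" .
  define b where "b = basis_completion u"
  note bc = basis_completion[OF u u0, folded b_def]
  have "n \<noteq> 0" using u u0 by (auto intro!: eq_vecI)
  with bc(6,7) obtain vs where b: "b = u # vs" by (cases b) auto
  define ws where "ws = gram_schmidt n b"
  note gs = gram_schmidt_result[OF bc(2) bc(4) bc(5) ws_def]
  have ws: "length ws = n" "\<And>i. i < n \<Longrightarrow> ws ! i \<in> carrier_vec n"
    using gs(3,4) bc(6) by auto
  have "hd ws = u"
    unfolding ws_def b using u by simp
  then have "ws ! 0 = u"
    using ws(1) \<open>n \<noteq> 0\<close> by (cases ws) auto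
  have orth: "i < n \<Longrightarrow> j < n \<Longrightarrow> (ws ! i \<bullet> ws ! j = 0) = (i \<noteq> j)" for i j
    using corthogonalD[OF gs(2), of i j] ws(1) by (simp add: conjugate_real_def)
  have pos: "i < n \<Longrightarrow> ws ! i \<bullet> ws ! i > 0" for i
    using orth[of i i] sum_nonneg[of "{0..<n}" "\<lambda>k. ws ! i $ k * ws ! i $ k"] ws(2)
    by (fastforce simp: scalar_prod_def)
  define W where "W = mat_of_cols n (map (\<lambda>w. (1 / sqrt (w \<bullet> w)) \<cdot>\<^sub>v w) ws)"
  have W: "W \<in> carrier_mat n n"
    unfolding W_def using mat_of_cols_carrier(1)[of n "map (\<lambda>w. (1 / sqrt (w \<bullet> w)) \<cdot>\<^sub>v w) ws"] ws(1)
    by simp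
  have colW: "col W i = (1 / sqrt (ws ! i \<bullet> ws ! i)) \<cdot>\<^sub>v ws ! i" if "i < n" for i
    unfolding W_def using that ws by simp
  have "transpose_mat W * W = 1\<^sub>m n"
  proof (rule eq_matI)
    fix i j assume "i < dim_row (1\<^sub>m n :: real mat)" "j < dim_col (1\<^sub>m n :: real mat)"
    then have i: "i < n" and j: "j < n" by auto
    have "(transpose_mat W * W) $$ (i, j)
        = (1 / sqrt (ws ! i \<bullet> ws ! i)) * (1 / sqrt (ws ! j \<bullet> ws ! j)) * (ws ! i \<bullet> ws ! j)"
      using W i j ws(2)[OF i] ws(2)[OF j] by (simp add: colW)
    also have "\<dots> = 1\<^sub>m n $$ (i, j)"
      using i j orth[OF i j] pos[OF i] by (cases "i = j") (simp_all add: field_simps)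
    finally show "(transpose_mat W * W) $$ (i, j) = 1\<^sub>m n $$ (i, j)" .
  qed (use W in auto)
  moreover have "col W 0 = (1 / sqrt (u \<bullet> u)) \<cdot>\<^sub>v u"
    using colW[of 0] \<open>ws ! 0 = u\<close> \<open>n \<noteq> 0\<close> by simp
  ultimately show ?thesis
    using W unfolding orthonormal_mat_def by blast
qed

lemma symmetric_mat_first_col_split:
  fixes A :: "real mat" and m :: nat
  defines "A3 \<equiv> mat m m (\<lambda>(i, j). A $$ (Suc i, Suc j))"
  assumes sym: "symmetric_mat (Suc m) A"
    and col: "\<And>i. i < Suc m \<Longrightarrow> A $$ (i, 0) = (if i = 0 then e else 0)"
  shows "A = four_block_mat (mat 1 1 (\<lambda>_. e)) (0\<^sub>m 1 m) (0\<^sub>m m 1) A3"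
    and "symmetric_mat m A3"
proof -
  have A: "A \<in> carrier_mat (Suc m) (Suc m)" and At: "transpose_mat A = A"
    using sym by (simp_all add: symmetric_mat_def)
  have swap: "A $$ (i, j) = A $$ (j, i)" if "i < Suc m" "j < Suc m" for i j
  proof -
    have "A $$ (i, j) = transpose_mat A $$ (j, i)"
      using that carrier_matD[OF A] by simp
    then show ?thesis
      unfolding At .
  qed
  show "A = four_block_mat (mat 1 1 (\<lambda>_. e)) (0\<^sub>m 1 m) (0\<^sub>m m 1) A3"
  proof (rule eq_matI)
    fix i j assume "i < dim_row (four_block_mat (mat 1 1 (\<lambda>_. e)) (0\<^sub>m 1 m) (0\<^sub>m m 1) A3)"
      "j < dim_col (four_block_mat (mat 1 1 (\<lambda>_. e)) (0\<^sub>m 1 m) (0\<^sub>m m 1) A3)"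
    then have i: "i < Suc m" and j: "j < Suc m" by (simp_all add: A3_def)
    consider "j = 0" | "i = 0" "j \<noteq> 0" | i' j' where "i = Suc i'" "j = Suc j'"
      by (cases i; cases j) auto
    then show "A $$ (i, j) = four_block_mat (mat 1 1 (\<lambda>_. e)) (0\<^sub>m 1 m) (0\<^sub>m m 1) A3 $$ (i, j)"
    proof cases
      case 1
      then show ?thesis using i col[OF i] by (simp add: A3_def)
    next
      case 2
      then show ?thesis using j col[OF j] swap[OF i j] by (simp add: A3_def)
    next
      case 3
      then show ?thesis using i j by (simp add: A3_def)
    qed
  qed (use A in \<open>simp_all add: A3_def\<close>)
  have "transpose_mat A3 = A3"
  proof (rule eq_matI)
    fix i j assume "i < dim_row A3" "j < dim_col A3"
    then show "transpose_mat A3 $$ (i, j) = A3 $$ (i, j)"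
      using swap[of "Suc j" "Suc i"] by (simp add: A3_def)
  qed (simp_all add: A3_def)
  then show "symmetric_mat m A3"
    by (simp add: symmetric_mat_def A3_def)
qed

lemma symmetric_mat_deflate:
  fixes A :: "real mat"
  assumes "symmetric_mat (Suc m) A"
  shows "\<exists>W e A3. orthonormal_mat (Suc m) W \<and> symmetric_mat m A3
    \<and> transpose_mat W * A * W = four_block_mat (mat 1 1 (\<lambda>_. e)) (0\<^sub>m 1 m) (0\<^sub>m m 1) A3"
proof -
  have A: "A \<in> carrier_mat (Suc m) (Suc m)" and At: "transpose_mat A = A"
    using assms by (simp_all add: symmetric_mat_def)
  obtain e where "eigenvalue A e"
    using symmetric_mat_has_eigenvalue[OF assms] by blast
  then obtain v where v: "v \<in> carrier_vec (Suc m)" "v \<noteq> 0\<^sub>v (Suc m)" "A *\<^sub>v v = e \<cdot>\<^sub>v v"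
    unfolding eigenvalue_def eigenvector_def using A by auto
  obtain W where W: "orthonormal_mat (Suc m) W" and col0: "col W 0 = (1 / sqrt (v \<bullet> v)) \<cdot>\<^sub>v v"
    using orthonormal_mat_with_first_col[OF v(1,2)] by blast
  have Wc: "W \<in> carrier_mat (Suc m) (Suc m)" and WtW: "transpose_mat W * W = 1\<^sub>m (Suc m)"
    using W by (simp_all add: orthonormal_mat_def)
  have Aw: "A *\<^sub>v col W 0 = e \<cdot>\<^sub>v col W 0"
    unfolding col0 using v A by (auto intro!: eq_vecI simp: mult_mat_vec)
  define A' where "A' = transpose_mat W * A * W"
  have "transpose_mat A' = A'"
    unfolding A'_def using A Wc At
    by (simp add: transpose_mult[of _ "Suc m" "Suc m" _ "Suc m"] assoc_mult_mat[of _ "Suc m" "Suc m" _ "Suc m" _ "Suc m"]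
        mult_carrier_mat[of _ "Suc m" "Suc m" _ "Suc m"])
  then have sym: "symmetric_mat (Suc m) A'"
    unfolding symmetric_mat_def A'_def using A Wc by simp
  have "A' $$ (i, 0) = (if i = 0 then e else 0)" if i: "i < Suc m" for i
  proof -
    have "A' $$ (i, 0) = row (transpose_mat W) i \<bullet> col (A * W) 0"
      unfolding A'_def using i A Wc by simp
    also have "\<dots> = col W i \<bullet> (A *\<^sub>v col W 0)"
      using i Wc col_mult2[OF A Wc, of 0] by simp
    also have "\<dots> = e * (transpose_mat W * W) $$ (i, 0)"
      unfolding Aw using i Wc by simp
    finally show ?thesis
      unfolding WtW using i by simp
  qed
  with symmetric_mat_first_col_split[OF sym] show ?thesis
    using W unfolding A'_def by blast
qed

theorem symmetric_mat_spectral: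
  fixes A :: "real mat"
  assumes "symmetric_mat n A"
  shows "\<exists>U g. orthonormal_mat n U \<and> A = U * mat_diag n g * transpose_mat U"
  using assms
proof (induction n arbitrary: A)
  case 0
  then have "A = 1\<^sub>m 0 * mat_diag 0 (\<lambda>_. 0) * transpose_mat (1\<^sub>m 0)"
    by (auto intro!: eq_matI simp: symmetric_mat_def)
  moreover have "orthonormal_mat 0 (1\<^sub>m 0 :: real mat)"
    by (simp add: orthonormal_mat_def)
  ultimately show ?case by blast
next
  case (Suc m)
  obtain W e A3 where W: "orthonormal_mat (Suc m) W" and A3: "symmetric_mat m A3"
    and WAW: "transpose_mat W * A * W = four_block_mat (mat 1 1 (\<lambda>_. e)) (0\<^sub>m 1 m) (0\<^sub>m m 1) A3"
    using symmetric_mat_deflate[OF Suc.prems] by blast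
  obtain U3 g3 where U3: "orthonormal_mat m U3" and A3_eq: "A3 = U3 * mat_diag m g3 * transpose_mat U3"
    using Suc.IH[OF A3] by blast
  have U3c: "U3 \<in> carrier_mat m m" using U3 by (rule orthonormal_mat_carrier)
  define Ub where "Ub = four_block_mat (1\<^sub>m 1) (0\<^sub>m 1 m) (0\<^sub>m m 1) U3"
  define g where "g = (\<lambda>i. if i = 0 then e else g3 (i - 1))"
  have D: "mat_diag (Suc m) g = four_block_mat (mat 1 1 (\<lambda>_. e)) (0\<^sub>m 1 m) (0\<^sub>m m 1) (mat_diag m g3)"
    by (rule eq_matI) (auto simp: mat_diag_def g_def)
  have Ub: "Ub \<in> carrier_mat (Suc m) (Suc m)"
    unfolding Ub_def using orthonormal_mat_carrier[OF orthonormal_mat_four_block_diag[OF U3]] .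
  have A: "A \<in> carrier_mat (Suc m) (Suc m)"
    using Suc.prems by (simp add: symmetric_mat_def)
  have "A = W * (transpose_mat W * A * W) * transpose_mat W"
    using orthonormal_mat_conj_cancel[OF W A] by simp
  also have "transpose_mat W * A * W = Ub * mat_diag (Suc m) g * transpose_mat Ub"
    unfolding Ub_def D WAW A3_eq using U3c
    by (simp add: mult_four_block_diag_mat transpose_four_block_diag_mat)
  also have "W * (Ub * mat_diag (Suc m) g * transpose_mat Ub) * transpose_mat W
      = (W * Ub) * mat_diag (Suc m) g * transpose_mat (W * Ub)"
    using orthonormal_mat_carrier[OF W] Ub by (rule mult_conj_transpose) simp
  finally have "A = (W * Ub) * mat_diag (Suc m) g * transpose_mat (W * Ub)" .
  moreover have "orthonormal_mat (Suc m) (W * Ub)"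
    unfolding Ub_def by (intro orthonormal_mat_mult W orthonormal_mat_four_block_diag U3)
  ultimately show ?case by blast
qed

section \<open>Newton transformations and rank-one updates\<close>

lemma mat_diag_cong: "(\<And>l. l < n \<Longrightarrow> f l = h l) \<Longrightarrow> mat_diag n f = mat_diag n h"
  by (auto intro!: eq_matI simp: mat_diag_def)

lemma mat_diag_pow: "mat_diag n g ^\<^sub>m i = mat_diag n (\<lambda>l. g l ^ i)"
proof (induction i)
  case 0
  then show ?case by (auto intro!: eq_matI simp: mat_diag_def)
next
  case (Suc i)
  then show ?case by (simp del: power_Suc add: power_Suc2)
qed

lemma mat_pow_orthonormal_conj:
  assumes U: "orthonormal_mat n U" and M: "M \<in> carrier_mat n n"
  shows "(U * M * transpose_mat U) ^\<^sub>m i = U * M ^\<^sub>m i * transpose_mat U"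
proof (induction i)
  case 0
  then show ?case
    using orthonormal_mat_mult_transpose[OF U] orthonormal_mat_carrier[OF U]
    by (simp add: carrier_matD[OF M] right_mult_one_mat[of _ n n])
next
  case (Suc i)
  have [simp]: "U \<in> carrier_mat n n" "transpose_mat U \<in> carrier_mat n n"
    using orthonormal_mat_carrier[OF U] by simp_all
  have "(U * M * transpose_mat U) ^\<^sub>m Suc i
      = U * (M ^\<^sub>m i * ((transpose_mat U * U) * (M * transpose_mat U)))"
    using Suc.IH M by (simp add: assoc_mult_mat[of _ n n _ n _ n] mult_carrier_mat[of _ n n _ n])
  also have "\<dots> = U * M ^\<^sub>m Suc i * transpose_mat U"
    using U M by (simp add: orthonormal_mat_def assoc_mult_mat[of _ n n _ n _ n]
        mult_carrier_mat[of _ n n _ n])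
  finally show ?case .
qed

lemma newton_T_orthonormal_conj:
  assumes U: "orthonormal_mat n U" and M: "M \<in> carrier_mat n n"
  shows "newton_T j (U * M * transpose_mat U) = U * newton_T j M * transpose_mat U"
proof -
  have [simp]: "U \<in> carrier_mat n n" "transpose_mat U \<in> carrier_mat n n"
    using orthonormal_mat_carrier[OF U] by simp_all
  have "foldr (\<lambda>i N. c i \<cdot>\<^sub>m ((U * M * transpose_mat U) ^\<^sub>m i) + N) xs (0\<^sub>m n n)
      = U * foldr (\<lambda>i N. c i \<cdot>\<^sub>m (M ^\<^sub>m i) + N) xs (0\<^sub>m n n) * transpose_mat U
    \<and> foldr (\<lambda>i N. c i \<cdot>\<^sub>m (M ^\<^sub>m i) + N) xs (0\<^sub>m n n) \<in> carrier_mat n n" for c xs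
  proof (induction xs)
    case (Cons i xs)
    define F where "F = foldr (\<lambda>i N. c i \<cdot>\<^sub>m (M ^\<^sub>m i) + N) xs (0\<^sub>m n n)"
    have F: "F \<in> carrier_mat n n" using Cons.IH by (simp add: F_def)
    have P: "M ^\<^sub>m i \<in> carrier_mat n n" using M by simp
    have "U * (c i \<cdot>\<^sub>m M ^\<^sub>m i + F) * transpose_mat U
        = (c i \<cdot>\<^sub>m (U * M ^\<^sub>m i) + U * F) * transpose_mat U"
      using P F by (simp add: mult_add_distrib_mat[of U n n _ n] mult_smult_distrib[of U n n _ n])
    also have "\<dots> = c i \<cdot>\<^sub>m (U * M ^\<^sub>m i * transpose_mat U) + U * F * transpose_mat U"
      using P F by (simp add: add_mult_distrib_mat[of _ n n _ _ n] mult_smult_assoc_mat[of _ n n _ n]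
          mult_carrier_mat[of _ n n _ n])
    finally have "c i \<cdot>\<^sub>m (U * M ^\<^sub>m i * transpose_mat U) + U * F * transpose_mat U
        = U * (c i \<cdot>\<^sub>m M ^\<^sub>m i + F) * transpose_mat U" ..
    then show ?case
      using Cons.IH M F by (simp add: mat_pow_orthonormal_conj[OF U M] F_def[symmetric])
  qed (simp add: right_mult_zero_mat[of U n n] left_mult_zero_mat[of "transpose_mat U" n n])
  moreover have "dim_row (U * M * transpose_mat U) = n" "dim_row M = n"
    using carrier_matD(1)[OF orthonormal_mat_carrier[OF U]] carrier_matD(1)[OF M] by simp_all
  ultimately show ?thesis
    unfolding newton_T_def by (simp add: sigma_orthonormal_conj[OF U M])
qed

lemma newton_T_mat_diag:
  "newton_T j (mat_diag n g) = mat_diag n (\<lambda>l. elem_sym g ({..<n} - {l}) j)"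
proof -
  have add: "a \<cdot>\<^sub>m mat_diag n f + mat_diag n h = mat_diag n (\<lambda>l. a * f l + h l)"
    for a :: real and f h
    by (auto intro!: eq_matI simp: mat_diag_def)
  have zero: "0\<^sub>m n n = mat_diag n (\<lambda>_. 0)"
    by (auto intro!: eq_matI simp: mat_diag_def)
  have "foldr (\<lambda>i N. c i \<cdot>\<^sub>m (mat_diag n g ^\<^sub>m i) + N) xs (0\<^sub>m n n)
      = mat_diag n (\<lambda>l. \<Sum>i\<leftarrow>xs. c i * g l ^ i)" for c xs
    by (induction xs) (simp_all add: mat_diag_pow add zero)
  then have "newton_T j (mat_diag n g)
      = mat_diag n (\<lambda>l. \<Sum>i\<leftarrow>[0..<Suc j]. (-1) ^ i * elem_sym g {..<n} (j - i) * g l ^ i)"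
    by (simp add: newton_T_def sigma_mat_diag)
  also have "\<dots> = mat_diag n (\<lambda>l. elem_sym g ({..<n} - {l}) j)"
  proof (rule mat_diag_cong)
    fix l assume "l < n"
    have "(\<Sum>i\<leftarrow>[0..<Suc j]. (-1) ^ i * elem_sym g {..<n} (j - i) * g l ^ i)
        = (\<Sum>i\<le>j. (-1) ^ i * elem_sym g {..<n} (j - i) * g l ^ i)"
      by (simp only: interv_sum_list_conv_sum_set_nat set_upt atLeast0LessThan lessThan_Suc_atMost)
    then show "(\<Sum>i\<leftarrow>[0..<Suc j]. (-1) ^ i * elem_sym g {..<n} (j - i) * g l ^ i)
        = elem_sym g ({..<n} - {l}) j"
      using elem_sym_remove_alternating_sum[of "{..<n}" l g j] \<open>l < n\<close> by simp
  qed
  finally show ?thesis .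
qed

lemma mat_inner_outer:
  assumes M: "M \<in> carrier_mat n n" and X: "X \<in> carrier_vec n"
  shows "mat_inner M (outer X) = X \<bullet> (M *\<^sub>v X)"
proof -
  have "(M * outer X) $$ (p, p) = X $ p * (M *\<^sub>v X) $ p" if "p < n" for p
    using M X that
    by (simp add: scalar_prod_def atLeast0LessThan sum_distrib_left algebra_simps)
  then show ?thesis
    using M X by (simp add: mat_inner_def mat_trace_def scalar_prod_def atLeast0LessThan)
qed

lemma mat_inner_orthonormal_conj_outer:
  assumes U: "orthonormal_mat n U" and M: "M \<in> carrier_mat n n" and X: "X \<in> carrier_vec n"
  shows "mat_inner (U * M * transpose_mat U) (outer X) = mat_inner M (outer (transpose_mat U *\<^sub>v X))"
proof -
  have [simp]: "U \<in> carrier_mat n n" "transpose_mat U \<in> carrier_mat n n"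
    using orthonormal_mat_carrier[OF U] by simp_all
  have UX: "transpose_mat U *\<^sub>v X \<in> carrier_vec n"
    using X by (simp add: mult_mat_vec_carrier[of _ n n])
  have "X \<bullet> (U * M * transpose_mat U *\<^sub>v X) = X \<bullet> (U *\<^sub>v (M *\<^sub>v (transpose_mat U *\<^sub>v X)))"
    using M X UX by (simp add: assoc_mult_mat_vec[of _ n n _ n] mult_carrier_mat[of _ n n _ n])
  also have "\<dots> = (transpose_mat U *\<^sub>v X) \<bullet> (M *\<^sub>v (transpose_mat U *\<^sub>v X))"
    using M X UX by (subst transpose_vec_mult_scalar[of U n n]) (auto simp: mult_mat_vec_carrier[of _ n n])
  finally show ?thesis
    using M X UX by (simp add: mat_inner_outer[of _ n] mult_carrier_mat[of _ n n _ n]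
        mult_mat_vec_carrier[of _ n n])
qed

lemma mat_inner_mat_diag_outer:
  assumes "Y \<in> carrier_vec n"
  shows "mat_inner (mat_diag n h) (outer Y) = (\<Sum>l<n. h l * (Y $ l)\<^sup>2)"
  using assms
  by (simp add: mat_inner_def mat_trace_def mat_diag_mult_left[of _ n n] power2_eq_square mult.assoc)

lemma outer_mult_mat_vec:
  assumes M: "M \<in> carrier_mat n n" and Y: "Y \<in> carrier_vec n"
  shows "outer (M *\<^sub>v Y) = M * outer Y * transpose_mat M"
proof (rule eq_matI)
  fix i j assume "i < dim_row (M * outer Y * transpose_mat M)" "j < dim_col (M * outer Y * transpose_mat M)"
  then have i: "i < n" and j: "j < n" using M by auto
  have "(M * outer Y) $$ (i, k) = (M *\<^sub>v Y) $ i * Y $ k" if "k < n" for k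
    using M Y i that by (simp add: scalar_prod_def sum_distrib_right mult.assoc)
  then have "(M * outer Y * transpose_mat M) $$ (i, j) = (M *\<^sub>v Y) $ i * (\<Sum>k<n. M $$ (j, k) * Y $ k)"
    using M Y i j by (simp add: scalar_prod_def atLeast0LessThan sum_distrib_left algebra_simps)
  then show "outer (M *\<^sub>v Y) $$ (i, j) = (M * outer Y * transpose_mat M) $$ (i, j)"
    using M Y i j by (simp add: scalar_prod_def atLeast0LessThan)
qed (use M Y in auto)

lemma mat_inner_newton_T_outer:
  assumes U: "orthonormal_mat n U" and X: "X \<in> carrier_vec n"
  shows "mat_inner (newton_T j (U * mat_diag n g * transpose_mat U)) (outer X)
    = (\<Sum>l<n. elem_sym g ({..<n} - {l}) j * ((transpose_mat U *\<^sub>v X) $ l)\<^sup>2)"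
proof -
  have "transpose_mat U *\<^sub>v X \<in> carrier_vec n"
    using orthonormal_mat_carrier[OF U] X by (simp add: mult_mat_vec_carrier[of _ n n])
  then show ?thesis
    using U X by (simp add: newton_T_orthonormal_conj mat_inner_orthonormal_conj_outer
        newton_T_mat_diag mat_inner_mat_diag_outer)
qed

lemma sigma_smult_minus_outer:
  fixes a :: "real mat"
  assumes a: "symmetric_mat n a" and X: "X \<in> carrier_vec n" and i: "1 \<le> i"
  shows "sigma i (s \<cdot>\<^sub>m a - outer X)
    = s ^ i * sigma i a - s ^ (i - 1) * mat_inner (newton_T (i - 1) a) (outer X)"
proof -
  obtain U lam where U: "orthonormal_mat n U" and a_eq: "a = U * mat_diag n lam * transpose_mat U"
    using symmetric_mat_spectral[OF a] by blast
  have [simp]: "U \<in> carrier_mat n n" "transpose_mat U \<in> carrier_mat n n"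
    using orthonormal_mat_carrier[OF U] by simp_all
  define Y where "Y = transpose_mat U *\<^sub>v X"
  have Y: "Y \<in> carrier_vec n"
    unfolding Y_def using X by (simp add: mult_mat_vec_carrier[of _ n n])
  have "X = U *\<^sub>v Y"
    unfolding Y_def using X orthonormal_mat_mult_transpose[OF U]
    by (simp add: assoc_mult_mat_vec[of _ n n _ n, symmetric])
  then have "outer X = U * outer Y * transpose_mat U"
    using Y by (simp add: outer_mult_mat_vec[of U n Y])
  moreover have "s \<cdot>\<^sub>m a = U * mat_diag n (\<lambda>l. s * lam l) * transpose_mat U"
  proof -
    have "s \<cdot>\<^sub>m mat_diag n lam = mat_diag n (\<lambda>l. s * lam l)"
      by (auto intro!: eq_matI simp: mat_diag_def)
    moreover have "U * (s \<cdot>\<^sub>m mat_diag n lam) * transpose_mat U = s \<cdot>\<^sub>m (U * mat_diag n lam * transpose_mat U)"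
      by (simp add: mult_smult_distrib[of U n n _ n] mult_smult_assoc_mat[of _ n n _ n]
          mult_carrier_mat[of _ n n _ n])
    ultimately show ?thesis
      unfolding a_eq by simp
  qed
  ultimately have E: "s \<cdot>\<^sub>m a - outer X = U * (mat_diag n (\<lambda>l. s * lam l) - outer Y) * transpose_mat U"
    using Y by (simp add: mult_minus_distrib_mat[of U n n _ n] minus_mult_distrib_mat[of _ n n _ _ n]
        mult_carrier_mat[of _ n n _ n])
  have "sigma i (s \<cdot>\<^sub>m a - outer X)
      = elem_sym (\<lambda>l. s * lam l) {..<n} i
        - (\<Sum>l<n. (Y $ l)\<^sup>2 * elem_sym (\<lambda>l. s * lam l) ({..<n} - {l}) (i - 1))"
    unfolding E using U Y i
    by (simp add: sigma_orthonormal_conj minus_carrier_mat sigma_mat_diag_minus_outer)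
  also have "\<dots> = s ^ i * elem_sym lam {..<n} i
      - s ^ (i - 1) * (\<Sum>l<n. elem_sym lam ({..<n} - {l}) (i - 1) * (Y $ l)\<^sup>2)"
    by (simp add: elem_sym_scale sum_distrib_left mult_ac)
  finally show ?thesis
    using U X by (simp add: a_eq Y_def sigma_orthonormal_conj sigma_mat_diag mat_inner_newton_T_outer)
qed

lemma mat_inner_newton_T_outer_cross_inequality:
  fixes a :: "real mat"
  assumes a: "symmetric_mat n a" and X: "X \<in> carrier_vec n"
  shows "sigma (j + 2) a * mat_inner (newton_T j a) (outer X)
    \<le> sigma (j + 1) a * mat_inner (newton_T (j + 1) a) (outer X)"
proof -
  obtain U lam where U: "orthonormal_mat n U" and a_eq: "a = U * mat_diag n lam * transpose_mat U"
    using symmetric_mat_spectral[OF a] by blast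
  define Y where "Y = transpose_mat U *\<^sub>v X"
  have "(\<Sum>l<n. elem_sym lam {..<n} (j + 2) * (elem_sym lam ({..<n} - {l}) j * (Y $ l)\<^sup>2))
      \<le> (\<Sum>l<n. elem_sym lam {..<n} (j + 1) * (elem_sym lam ({..<n} - {l}) (j + 1) * (Y $ l)\<^sup>2))"
  proof (rule sum_mono)
    fix l assume "l \<in> {..<n}"
    then show "elem_sym lam {..<n} (j + 2) * (elem_sym lam ({..<n} - {l}) j * (Y $ l)\<^sup>2)
      \<le> elem_sym lam {..<n} (j + 1) * (elem_sym lam ({..<n} - {l}) (j + 1) * (Y $ l)\<^sup>2)"
      using mult_right_mono[OF elem_sym_remove_cross_inequality[of "{..<n}" l lam j]
          zero_le_power2[of "Y $ l"]]
      by (simp add: mult_ac)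
  qed
  then show ?thesis
    using U X unfolding a_eq
    by (simp add: sigma_orthonormal_conj sigma_mat_diag mat_inner_newton_T_outer sum_distrib_left
        Y_def[symmetric])
qed

lemma powi_sigma_smult_minus_outer:
  fixes a :: "real mat"
  assumes "symmetric_mat n a" "X \<in> carrier_vec n" "1 \<le> i" "s \<noteq> 0"
  shows "s powi (1 - int i) * sigma i (s \<cdot>\<^sub>m a - outer X)
    = s * sigma i a - mat_inner (newton_T (i - 1) a) (outer X)"
proof -
  have "s powi (1 - int i) = s / s ^ i"
    using assms(4) by (simp add: power_int_diff)
  moreover have "s ^ i = s * s ^ (i - 1)"
    using assms(3) by (cases i) auto
  ultimately show ?thesis
    unfolding sigma_smult_minus_outer[OF assms(1-3)] using assms(4) by (simp add: field_simps)
qed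

lemma sigma_smult_minus_outer_lower_bound:
  fixes a :: "real mat"
  assumes a: "symmetric_mat n a" and X: "X \<in> carrier_vec n" and s: "0 \<le> s"
    and i: "2 \<le> i" and q: "0 < sigma i a"
  shows "(s * sigma i a - mat_inner (newton_T (i - 1) a) (outer X)) * inverse (sigma i a)
      * sigma (i - 1) a * s ^ (i - 2)
    \<le> sigma (i - 1) (s \<cdot>\<^sub>m a - outer X)"
proof -
  obtain j where j: "i = j + 2" using i by (metis add.commute le_Suc_ex)
  define p T0 T1 where "p = sigma (j + 1) a" and "T0 = mat_inner (newton_T j a) (outer X)"
    and "T1 = mat_inner (newton_T (j + 1) a) (outer X)"
  have "sigma i a * T0 \<le> p * T1"
    unfolding j p_def T0_def T1_def by (rule mat_inner_newton_T_outer_cross_inequality[OF a X])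
  then have "T0 \<le> p * T1 / sigma i a"
    using q by (simp add: pos_le_divide_eq mult.commute)
  then have "(s * sigma i a - T1) * inverse (sigma i a) * p \<le> s * p - T0"
    using q by (simp add: field_simps)
  then have "(s * sigma i a - T1) * inverse (sigma i a) * p * s ^ j \<le> (s * p - T0) * s ^ j"
    using s by (simp add: mult_right_mono)
  moreover have "sigma (j + 1) (s \<cdot>\<^sub>m a - outer X) = (s * p - T0) * s ^ j"
    unfolding p_def T0_def using sigma_smult_minus_outer[OF a X, of "j + 1" s]
    by (simp add: algebra_simps)
  ultimately show ?thesis
    unfolding j p_def T1_def by simp
qed

theorem proposition3p5:
  fixes n k :: nat and a :: "real mat" and s :: real and X :: "real vec"
  assumes "symmetric_mat n a"
    and "1 \<le> k" and "k \<le> n"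
    and "a \<in> Gamma_plus n k"
    and "s > 0"
    and "X \<in> carrier_vec n"
    and "sigma k (s \<cdot>\<^sub>m a - outer X) > 0"
  shows "s \<cdot>\<^sub>m a - outer X \<in> Gamma_plus n k
    \<and> (\<forall>i. 1 \<le> i \<and> i \<le> k \<longrightarrow>
          s powi (1 - int i) * sigma i (s \<cdot>\<^sub>m a - outer X)
            = s * sigma i a - mat_inner (newton_T (i - 1) a) (outer X))
    \<and> (\<forall>i. 2 \<le> i \<and> i \<le> k \<longrightarrow>
          sigma (i - 1) (s \<cdot>\<^sub>m a - outer X)
            \<ge> (s powi (1 - int i) * sigma i (s \<cdot>\<^sub>m a - outer X))
               * inverse (sigma i a) * sigma (i - 1) a * s ^ (i - 2))"
proof -
  let ?E = "s \<cdot>\<^sub>m a - outer X"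
  have sigma_a: "0 < sigma j a" if "1 \<le> j" "j \<le> k" for j
    using assms(4) that by (simp add: Gamma_plus_def)
  have f: "s powi (1 - int i) * sigma i ?E = s * sigma i a - mat_inner (newton_T (i - 1) a) (outer X)"
    if "1 \<le> i" for i
    using powi_sigma_smult_minus_outer[OF assms(1,6) that] assms(5) by simp
  have lower: "(s powi (1 - int i) * sigma i ?E) * inverse (sigma i a) * sigma (i - 1) a * s ^ (i - 2)
      \<le> sigma (i - 1) ?E" if "2 \<le> i" "i \<le> k" for i
    using sigma_smult_minus_outer_lower_bound[OF assms(1,6) _ that(1) sigma_a[of i]] f[of i] assms(5) that
    by simp
  have pos: "0 < sigma j ?E" if "1 \<le> j" "j \<le> k" for j
    using that(2,1)
  proof (induction j rule: inc_induct)
    case (step j)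
    then have "0 < s powi (1 - int (Suc j)) * sigma (Suc j) ?E * inverse (sigma (Suc j) a)
        * sigma j a * s ^ (Suc j - 2)"
      using sigma_a[of j] sigma_a[of "Suc j"] assms(5) by (simp add: mult_pos_pos)
    then show ?case
      using lower[of "Suc j"] step by simp
  qed (use assms(7) in simp)
  have "?E \<in> carrier_mat n n"
    using assms(6) by (intro minus_carrier_mat) simp
  then show ?thesis
    using pos f lower by (simp add: Gamma_plus_def)
qed

end
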